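(* Let $k>1$ be an integer and let $\nu$ be a probability distribution on $\mathbb{R}^k$ which is not gaussian, but such that whenever $(X_1,\dots,X_k)$ has distribution $\nu$, for every $i\in\{1,\dots,k\}$ the $k-1$ random variables $X_1,\dots,X_{i-1},X_{i+1},\dots,X_k$ (the $i$-th one omitted) are i.i.d. $N(0,1)$. Let $\{(X_{n1},X_{n2},\dots,X_{nk}) : n\in\mathbb{Z}\}$ be a bilateral sequence of i.i.d. $\mathbb{R}^k$-valued random variables with common distribution $\nu$, and define $$Y_n = X_{n\,k} + X_{n+1\,\,k-1} + X_{n+2\,\,k-2} + \cdots + X_{n+k-1\,\,1},\qquad n\in\mathbb{Z}.$$ Then the process $\{Y_n : n\in\mathbb{Z}\}$ is strictly stationary and $(k-1)$-step independent, i.e. for every integer $m$ the families $\{Y_n : n\le m\}$ and $\{Y_n : n\ge m+k\}$ are independent; moreover, for any distinct integers $n_1<n_2<\dots<n_{k-1}$, the random vector $(Y_{n_1},\dots,Y_{n_{k-1}})$ is gaussian with mean $\mathbf{0}$ and covariance matrix $kI$, where $I$ is the identity matrix of order $k-1$. In particular, $\{Y_n\}$ is ergodic (with respect to the shift).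
   Context: An example of such a $\nu$ is the distribution with density $\psi(\mathbf{x}) = (2\pi)^{-k/2}\{1 + x_1x_2\cdots x_k\, e^{-|\mathbf{x}|^2/2}\}e^{-|\mathbf{x}|^2/2}$ on $\mathbb{R}^k$. In the definition of $Y_n$, the summand $X_{r\,s}$ denotes the $s$-th coordinate of the $r$-th vector of the sequence; the sum of the two indices in each summand equals $n+k$. *)

theory Defs
  imports "HOL-Probability.Probability"
begin

text \<open>Vectors of \<open>\<real>\<^sup>I\<close> are represented as functions on the finite index set I
  (measurable space \<open>PiM I (\<lambda>_. borel)\<close>).\<close>

definition normal_measure :: "real \<Rightarrow> real \<Rightarrow> real measure" where
  "normal_measure m v =
     (if v = 0 then return borel m else density lborel (normal_density m (sqrt v)))"

definition gaussian_law :: "'i set \<Rightarrow> ('i \<Rightarrow> real) measure \<Rightarrow> bool" where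
  "gaussian_law I \<mu> \<longleftrightarrow>
     (\<forall>a. \<exists>m v. v \<ge> 0 \<and>
        distr \<mu> borel (\<lambda>x. \<Sum>i\<in>I. a i * x i) = normal_measure m v)"

definition gaussian_law_with ::
  "'i set \<Rightarrow> ('i \<Rightarrow> real) measure \<Rightarrow> ('i \<Rightarrow> real) \<Rightarrow> ('i \<Rightarrow> 'i \<Rightarrow> real) \<Rightarrow> bool" where
  "gaussian_law_with I \<mu> m C \<longleftrightarrow>
     (\<forall>a. distr \<mu> borel (\<lambda>x. \<Sum>i\<in>I. a i * x i) =
          normal_measure (\<Sum>i\<in>I. a i * m i) (\<Sum>i\<in>I. \<Sum>j\<in>I. a i * a j * C i j))"

definition std_normal :: "real measure" where
  "std_normal = density lborel std_normal_density"

abbreviation path_space :: "(int \<Rightarrow> real) measure" where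
  "path_space \<equiv> PiM UNIV (\<lambda>_. borel)"

definition shift :: "(int \<Rightarrow> real) \<Rightarrow> (int \<Rightarrow> real)" where
  "shift f = (\<lambda>n. f (n + 1))"

end

theory Submission
  imports Defs
begin

text \<open>
  Row r of the array enters \<open>Y n\<close> only for \<open>n \<le> r < n + k\<close>, so the process is a fixed
  measurable function of the i.i.d. row sequence commuting with the shift. This gives
  stationarity, and \<open>(k - 1)\<close>-dependence because \<open>Y n\<close> for \<open>n \<le> m\<close> and for
  \<open>n \<ge> m + k\<close> use disjoint sets of rows. For fewer than k indices, a linear combination
  \<open>\<Sum>i. a i * Y (n i)\<close> regroups into a sum over rows of independent linear forms, each involving
  fewer than k coordinates of its row and hence, by the marginal hypothesis, a centred normal
  variable; characteristic functions then identify its law as \<open>N(0, k * (\<Sum>i. (a i)\<^sup>2))\<close>.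
  Ergodicity follows from mixing: an invariant set is approximated by a cylinder C, which is
  independent of a far shift of itself, so the probability p of the invariant set satisfies
  \<open>p = p\<^sup>2\<close>.
\<close>

lemma prob_space_std_normal: "prob_space std_normal"
  unfolding std_normal_def using prob_space_normal_density by simp

lemma sets_std_normal [simp, measurable_cong]: "sets std_normal = sets borel"
  by (simp add: std_normal_def)

lemma char_scaled_std_normal:
  "char (distr std_normal borel (\<lambda>x. c * x)) t = complex_of_real (exp (- ((c * t)\<^sup>2) / 2))"
proof -
  have "char (distr std_normal borel (\<lambda>x. c * x)) t = char std_normal (c * t)"
    by (simp add: char_def integral_distr mult_ac)
  then show ?thesis
    by (simp add: std_normal_def char_std_normal_distribution)
qed

lemma normal_measure_0_eq_distr_std_normal:
  assumes "v \<ge> 0"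
  shows "normal_measure 0 v = distr std_normal borel (\<lambda>x. sqrt v * x)"
proof (cases "v = 0")
  case True
  then show ?thesis
    by (simp add: normal_measure_def prob_space.distr_const[OF prob_space_std_normal])
next
  case False
  with assms have "v > 0" by simp
  interpret prob_space std_normal by (rule prob_space_std_normal)
  have "distributed std_normal lborel (\<lambda>x. x) (normal_density 0 1)"
    by (auto simp: distributed_def std_normal_def distr_id2)
  from normal_density_affine[OF this, of "sqrt v" 0] \<open>v > 0\<close>
  have "distr std_normal lborel (\<lambda>x. sqrt v * x) = density lborel (normal_density 0 (sqrt v))"
    by (simp add: distributed_def)
  moreover have "distr std_normal borel (\<lambda>x. sqrt v * x) = distr std_normal lborel (\<lambda>x. sqrt v * x)"
    by (rule distr_cong) auto
  ultimately show ?thesis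
    using False by (simp add: normal_measure_def)
qed

lemma char_normal_measure_0:
  "v \<ge> 0 \<Longrightarrow> char (normal_measure 0 v) t = complex_of_real (exp (- v * t\<^sup>2 / 2))"
  by (simp add: normal_measure_0_eq_distr_std_normal char_scaled_std_normal power_mult_distrib)

lemma real_distribution_normal_measure_0:
  "v \<ge> 0 \<Longrightarrow> real_distribution (normal_measure 0 v)"
  unfolding normal_measure_0_eq_distr_std_normal real_distribution_def real_distribution_axioms_def
  by (auto intro!: prob_space.prob_space_distr prob_space_std_normal)

lemma indep_vars_PiM_components:
  assumes "\<And>i. i \<in> I \<Longrightarrow> prob_space (N i)"
  shows "prob_space.indep_vars (PiM I N) N (\<lambda>i x. x i) I"
proof -
  interpret prob_space "PiM I N" using assms by (rule prob_space_PiM)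
  show ?thesis
  proof (cases "I = {}")
    case True
    show ?thesis unfolding indep_vars_def2 indep_sets_def using True by blast
  next
    case False
    have "distr (PiM I N) (PiM I N) (\<lambda>x. restrict x I) = PiM I N"
      by (subst distr_cong[where g = "\<lambda>x. x", OF refl refl]) (auto simp: space_PiM)
    also have "\<dots> = PiM I (\<lambda>i. distr (PiM I N) (N i) (\<lambda>x. x i))"
      using assms by (intro PiM_cong refl distr_PiM_component[symmetric])
    finally show ?thesis
      by (subst indep_vars_iff_distr_eq_PiM'[OF False]) auto
  qed
qed

lemma char_sum_scaled_PiM_std_normal:
  assumes "finite J"
  shows "char (distr (PiM J (\<lambda>_. std_normal)) borel (\<lambda>y. \<Sum>j\<in>J. b j * y j)) t
       = complex_of_real (exp (- (\<Sum>j\<in>J. (b j)\<^sup>2) * t\<^sup>2 / 2))"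
proof -
  let ?P = "PiM J (\<lambda>_. std_normal)"
  interpret prob_space ?P by (intro prob_space_PiM prob_space_std_normal)
  have "indep_vars (\<lambda>_. std_normal) (\<lambda>j y. y j) J"
    by (intro indep_vars_PiM_components prob_space_std_normal)
  then have indep: "indep_vars (\<lambda>_. borel) (\<lambda>j y. b j * y j) J"
    by (rule indep_vars_compose2[where Y = "\<lambda>j x. b j * x"]) simp
  have component: "distr ?P borel (\<lambda>y. b j * y j) = distr std_normal borel (\<lambda>x. b j * x)"
    if "j \<in> J" for j
  proof -
    have "distr ?P borel (\<lambda>y. b j * y j) = distr (distr ?P std_normal (\<lambda>y. y j)) borel (\<lambda>x. b j * x)"
      using that by (subst distr_distr) (auto simp: comp_def)
    then show ?thesis
      using distr_PiM_component[OF prob_space_std_normal that] by simp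
  qed
  have "char (distr ?P borel (\<lambda>y. \<Sum>j\<in>J. b j * y j)) t
      = (\<Prod>j\<in>J. complex_of_real (exp (- ((b j * t)\<^sup>2) / 2)))"
    by (simp add: char_distr_sum[OF indep] component char_scaled_std_normal)
  also have "\<dots> = complex_of_real (exp (\<Sum>j\<in>J. - ((b j * t)\<^sup>2) / 2))"
    using assms by (simp add: exp_sum)
  also have "(\<Sum>j\<in>J. - ((b j * t)\<^sup>2) / 2) = - (\<Sum>j\<in>J. (b j)\<^sup>2) * t\<^sup>2 / 2"
    by (simp add: sum_divide_distrib[symmetric] sum_distrib_right[symmetric] power_mult_distrib sum_negf)
  finally show ?thesis .
qed

lemma char_linear_form_omitting_coordinate:
  assumes sets_\<nu>: "sets \<nu> = sets (PiM I (\<lambda>_. borel))"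
    and marginal: "distr \<nu> (PiM (I - {i}) (\<lambda>_. borel)) (\<lambda>x. restrict x (I - {i}))
                     = PiM (I - {i}) (\<lambda>_. std_normal)"
    and J: "finite J" "inj_on g J" "g ` J \<subseteq> I - {i}"
  shows "char (distr \<nu> borel (\<lambda>x. \<Sum>j\<in>J. b j * x (g j))) t
       = complex_of_real (exp (- (\<Sum>j\<in>J. (b j)\<^sup>2) * t\<^sup>2 / 2))"
proof -
  let ?T = "I - {i}"
  let ?form = "\<lambda>z. \<Sum>j\<in>J. b j * z j"
  have form_meas: "?form \<in> borel_measurable (PiM J (\<lambda>_. std_normal))"
    by measurable
  have pick_meas: "(\<lambda>x. \<lambda>j\<in>J. x (g j)) \<in> measurable (PiM ?T (\<lambda>_. borel)) (PiM J (\<lambda>_. std_normal))"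
    using J(3) by (auto intro!: measurable_restrict measurable_component_singleton
                       simp: measurable_cong_sets[OF refl sets_std_normal])
  have "distr \<nu> borel (\<lambda>x. \<Sum>j\<in>J. b j * x (g j))
      = distr \<nu> borel (?form \<circ> (\<lambda>x. \<lambda>j\<in>J. x (g j)) \<circ> (\<lambda>x. restrict x ?T))"
    using J(3) by (intro distr_cong) (auto simp: subset_eq)
  also have "\<dots> = distr (distr (distr \<nu> (PiM ?T (\<lambda>_. borel)) (\<lambda>x. restrict x ?T))
                    (PiM J (\<lambda>_. std_normal)) (\<lambda>x. \<lambda>j\<in>J. x (g j))) borel ?form"
    using pick_meas form_meas
    by (simp add: distr_distr measurable_cong_sets[OF sets_\<nu> refl] measurable_restrict_subset comp_assoc)
  also have "\<dots> = distr (PiM J (\<lambda>_. std_normal)) borel ?form"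
    using J distr_PiM_reindex[of ?T "\<lambda>_. std_normal" g J]
    by (simp add: marginal prob_space_std_normal image_subset_iff_funcset)
  finally show ?thesis
    using char_sum_scaled_PiM_std_normal[OF J(1)] by simp
qed

lemma (in prob_space) distr_indep_vars_eq_PiM:
  assumes indep: "indep_vars N X I"
  shows "distr M (PiM I N) (\<lambda>\<omega>. \<lambda>i\<in>I. X i \<omega>) = PiM I (\<lambda>i. distr M (N i) (X i))"
proof (rule measure_eqI_PiM_infinite)
  have rv: "\<And>i. i \<in> I \<Longrightarrow> random_variable (N i) (X i)"
    using indep by (simp add: indep_vars_def)
  then have X_meas: "(\<lambda>\<omega>. \<lambda>i\<in>I. X i \<omega>) \<in> measurable M (PiM I N)"
    by (rule measurable_restrict)
  then show "finite_measure (distr M (PiM I N) (\<lambda>\<omega>. \<lambda>i\<in>I. X i \<omega>))"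
    using prob_space_distr prob_space_def by blast
  fix J A assume J: "finite J" "J \<subseteq> I" and A: "\<And>i. i \<in> J \<Longrightarrow> A i \<in> sets (N i)"
  let ?E = "prod_emb I N J (Pi\<^sub>E J A)"
  have E: "?E \<in> sets (PiM I N)"
    using J A by (intro measurable_prod_emb sets_PiM_I_finite) auto
  have preimage: "(\<lambda>\<omega>. \<lambda>i\<in>I. X i \<omega>) -` ?E \<inter> space M = (\<Inter>i\<in>J. X i -` A i \<inter> space M) \<inter> space M"
    using J measurable_space[OF rv] by (auto simp: prod_emb_def space_PiM PiE_def Pi_def extensional_def)
  have "emeasure (distr M (PiM I N) (\<lambda>\<omega>. \<lambda>i\<in>I. X i \<omega>)) ?E
      = (\<Prod>i\<in>J. emeasure M (X i -` A i \<inter> space M))"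
  proof (cases "J = {}")
    case True
    then show ?thesis
      using X_meas E preimage by (simp add: emeasure_distr emeasure_space_1)
  next
    case False
    then have "(\<Inter>i\<in>J. X i -` A i \<inter> space M) \<inter> space M = (\<Inter>i\<in>J. X i -` A i \<inter> space M)"
      by auto
    then have "emeasure M ((\<Inter>i\<in>J. X i -` A i \<inter> space M) \<inter> space M)
        = (\<Prod>i\<in>J. emeasure M (X i -` A i \<inter> space M))"
      using indep_varsD[OF indep False J(1,2) A]
      by (simp add: emeasure_eq_measure prod_ennreal)
    then show ?thesis
      using X_meas E preimage by (simp add: emeasure_distr)
  qed
  also have "\<dots> = emeasure (PiM I (\<lambda>i. distr M (N i) (X i)))
                      (prod_emb I (\<lambda>i. distr M (N i) (X i)) J (Pi\<^sub>E J A))"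
    using J A rv by (subst emeasure_PiM_emb) (auto simp: emeasure_distr subset_eq prob_space_distr)
  finally show "emeasure (distr M (PiM I N) (\<lambda>\<omega>. \<lambda>i\<in>I. X i \<omega>)) ?E
      = emeasure (PiM I (\<lambda>i. distr M (N i) (X i))) ?E"
    by (simp add: prod_emb_def)
qed (simp_all cong: sets_PiM_cong)

lemma (in finite_measure) measure_sym_diff_triangle:
  assumes "A \<in> sets M" "B \<in> sets M" "C \<in> sets M"
  shows "measure M (sym_diff A C) \<le> measure M (sym_diff A B) + measure M (sym_diff B C)"
proof -
  have "measure M (sym_diff A C) \<le> measure M (sym_diff A B \<union> sym_diff B C)"
    using assms by (intro finite_measure_mono) auto
  also have "\<dots> \<le> measure M (sym_diff A B) + measure M (sym_diff B C)"
    using assms by (intro measure_Un_le) auto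
  finally show ?thesis .
qed

lemma (in finite_measure) abs_measure_diff_le_measure_sym_diff:
  assumes "A \<in> sets M" "B \<in> sets M"
  shows "\<bar>measure M A - measure M B\<bar> \<le> measure M (sym_diff A B)"
proof -
  have "measure M A \<le> measure M B + measure M (sym_diff A B)"
    using measure_sym_diff_triangle[of A B "{}"] assms by simp
  moreover have "measure M B \<le> measure M A + measure M (sym_diff A B)"
    using measure_sym_diff_triangle[of B A "{}"] assms by (simp add: Un_commute)
  ultimately show ?thesis by linarith
qed

definition approximable :: "'a measure \<Rightarrow> 'a set set \<Rightarrow> 'a set \<Rightarrow> bool" where
  "approximable M G A \<longleftrightarrow> (\<forall>e>0. \<exists>C\<in>G. measure M (sym_diff A C) < e)"

lemma (in finite_measure) approximable_Un:
  assumes G: "algebra (space M) G" "G \<subseteq> sets M"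
    and approx: "approximable M G A" "approximable M G B" and sets: "A \<in> sets M" "B \<in> sets M"
  shows "approximable M G (A \<union> B)"
  unfolding approximable_def
proof (intro allI impI)
  interpret G: algebra "space M" G by (rule G(1))
  fix e :: real assume "e > 0"
  then obtain C D where CD: "C \<in> G" "D \<in> G"
    "measure M (sym_diff A C) < e / 2" "measure M (sym_diff B D) < e / 2"
    using approx unfolding approximable_def by (meson half_gt_zero)
  have "measure M (sym_diff (A \<union> B) (C \<union> D)) \<le> measure M (sym_diff A C \<union> sym_diff B D)"
    using sets CD G by (intro finite_measure_mono) auto
  also have "\<dots> \<le> measure M (sym_diff A C) + measure M (sym_diff B D)"
    using sets CD G by (intro measure_Un_le) auto
  finally show "\<exists>C\<in>G. measure M (sym_diff (A \<union> B) C) < e"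
    using CD by (intro bexI[of _ "C \<union> D"]) auto
qed

lemma (in finite_measure) approximable_UN:
  assumes G: "algebra (space M) G" "G \<subseteq> sets M"
    and approx: "\<And>i. approximable M G (A i)" and sets: "\<And>i. A i \<in> sets M"
  shows "approximable M G (\<Union>i::nat. A i)"
  unfolding approximable_def
proof (intro allI impI)
  fix e :: real assume "e > 0"
  define U where "U n = (\<Union>i<n. A i)" for n
  have U_sets: "U n \<in> sets M" for n
    using sets by (auto simp: U_def)
  have approx_U: "approximable M G (U n)" for n
  proof (induction n)
    case 0
    have "{} \<in> G"
      using G(1) by (simp add: algebra_iff_Un)
    then show ?case
      by (force simp: approximable_def U_def)
  next
    case (Suc n)
    then show ?case
      using approximable_Un[OF G Suc approx U_sets sets] by (simp add: U_def lessThan_Suc Un_commute)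
  qed
  have "incseq U"
    unfolding U_def by (intro monoI UN_mono) auto
  moreover have "(\<Union>n. U n) = (\<Union>i. A i)"
    by (auto simp: U_def)
  ultimately have "(\<lambda>n. measure M (U n)) \<longlonglongrightarrow> measure M (\<Union>i. A i)"
    using finite_Lim_measure_incseq[of U] U_sets by auto
  from order_tendstoD(1)[OF this, of "measure M (\<Union>i. A i) - e / 2"] \<open>e > 0\<close>
  obtain n where n: "measure M (\<Union>i. A i) - e / 2 < measure M (U n)"
    by (auto simp: eventually_sequentially)
  obtain C where C: "C \<in> G" "measure M (sym_diff (U n) C) < e / 2"
    using approx_U[of n] \<open>e > 0\<close> unfolding approximable_def by (meson half_gt_zero)
  have "sym_diff (\<Union>i. A i) (U n) = (\<Union>i. A i) - U n"
    by (auto simp: U_def)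
  moreover have "measure M ((\<Union>i. A i) - U n) = measure M (\<Union>i. A i) - measure M (U n)"
    using sets U_sets by (intro finite_measure_Diff) (auto simp: U_def)
  ultimately have "measure M (sym_diff (\<Union>i. A i) C) < e"
    using measure_sym_diff_triangle[of "\<Union>i. A i" "U n" C] sets U_sets G C n by auto
  then show "\<exists>C\<in>G. measure M (sym_diff (\<Union>i. A i) C) < e"
    using C(1) by blast
qed

lemma (in finite_measure) approximable_generating_algebra:
  assumes G: "algebra (space M) G" and sets_eq: "sets M = sigma_sets (space M) G"
    and "E \<in> sets M"
  shows "approximable M G E"
proof -
  interpret G: algebra "space M" G by (rule G)
  have G_sets: "G \<subseteq> sets M"
    using sets_eq by auto
  from G.Int_stable G.space_closed \<open>E \<in> sets M\<close>[unfolded sets_eq] show ?thesis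
  proof (induction rule: sigma_sets_induct_disjoint)
    case (basic A)
    then show ?case by (force simp: approximable_def)
  next
    case empty
    then show ?case by (force simp: approximable_def)
  next
    case (compl A)
    have "sym_diff (space M - A) (space M - C) = sym_diff A C" if "C \<in> G" for C
      using that compl.hyps sets_eq sets.sets_into_space G.space_closed by auto
    then show ?case
      using compl.IH unfolding approximable_def by (metis G.compl_sets)
  next
    case (union A)
    show ?case
      by (rule approximable_UN[OF G G_sets union.IH]) (use union.hyps sets_eq in auto)
  qed
qed

lemma (in finite_measure) measure_sym_diff_Int_le:
  assumes "A \<in> sets M" "B \<in> sets M" "C \<in> sets M"
  shows "measure M (sym_diff A (B \<inter> C)) \<le> measure M (sym_diff A B) + measure M (sym_diff A C)"
proof -
  have "measure M (sym_diff A (B \<inter> C)) \<le> measure M (sym_diff A B \<union> sym_diff A C)"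
    using assms by (intro finite_measure_mono) auto
  also have "\<dots> \<le> measure M (sym_diff A B) + measure M (sym_diff A C)"
    using assms by (intro measure_Un_le) auto
  finally show ?thesis .
qed

lemma abs_power2_diff_le:
  fixes p q :: real
  assumes "0 \<le> p" "p \<le> 1" "0 \<le> q" "q \<le> 1"
  shows "\<bar>q\<^sup>2 - p\<^sup>2\<bar> \<le> 2 * \<bar>q - p\<bar>"
proof -
  have "\<bar>q\<^sup>2 - p\<^sup>2\<bar> = \<bar>q + p\<bar> * \<bar>q - p\<bar>"
    by (simp only: power2_eq_square square_diff_square_factored abs_mult)
  also have "\<dots> \<le> 2 * \<bar>q - p\<bar>"
    using assms by (intro mult_right_mono) auto
  finally show ?thesis .
qed

definition shift_by :: "int \<Rightarrow> (int \<Rightarrow> real) \<Rightarrow> (int \<Rightarrow> real)" where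
  "shift_by h f = (\<lambda>n. f (n + h))"

lemma measurable_shift_by [measurable]: "shift_by h \<in> measurable path_space path_space"
  unfolding shift_by_def by (rule measurable_PiM_single') (auto intro: measurable_component_singleton)

lemma funpow_shift: "shift ^^ n = shift_by (int n)"
  by (induction n) (auto simp: shift_def shift_by_def fun_eq_iff ac_simps)

lemma shift_by_vimage_eq_if_invariant:
  assumes "shift -` A \<inter> space path_space = A" "h \<ge> 0"
  shows "shift_by h -` A = A"
proof -
  have "(shift ^^ n) -` A = A" for n
    using assms(1) by (induction n) (simp_all add: space_PiM funpow_Suc_right flip: vimage_comp)
  then show ?thesis
    by (metis funpow_shift nat_0_le assms(2))
qed

lemma projective_family_marginals:
  assumes "prob_space \<mu>" "sets \<mu> = sets (PiM I M)"
  shows "projective_family I (\<lambda>J. distr \<mu> (PiM J M) (\<lambda>x. restrict x J)) M"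
proof (rule projective_family.intro)
  fix J H assume "J \<subseteq> H" "finite H" "H \<subseteq> I"
  then show "distr \<mu> (PiM J M) (\<lambda>x. restrict x J)
           = distr (distr \<mu> (PiM H M) (\<lambda>x. restrict x H)) (PiM J M) (\<lambda>x. restrict x J)"
    by (subst distr_distr)
      (auto simp: comp_def measurable_cong_sets[OF assms(2) refl] Int_absorb1 Int_absorb2
            intro!: distr_cong measurable_restrict_subset)
next
  fix J
  show "prob_space (distr \<mu> (PiM J M) (\<lambda>x. restrict x J))" if "finite J" "J \<subseteq> I"
    using that assms by (intro prob_space.prob_space_distr)
      (auto simp: measurable_cong_sets[OF assms(2) refl] intro!: measurable_restrict_subset)
qed

context
  fixes \<mu> :: "(int \<Rightarrow> real) measure" and d :: nat
  assumes prob_\<mu>: "prob_space \<mu>" and sets_\<mu>: "sets \<mu> = sets path_space"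
    and stationary: "\<And>h. distr \<mu> path_space (shift_by h) = \<mu>"
    and dependent: "\<And>m S T. S \<in> sets (PiM {..m} (\<lambda>_. borel)) \<Longrightarrow>
        T \<in> sets (PiM {m + int d..} (\<lambda>_. borel)) \<Longrightarrow>
        measure \<mu> (prod_emb UNIV (\<lambda>_. borel) {..m} S \<inter> prod_emb UNIV (\<lambda>_. borel) {m + int d..} T)
        = measure \<mu> (prod_emb UNIV (\<lambda>_. borel) {..m} S)
          * measure \<mu> (prod_emb UNIV (\<lambda>_. borel) {m + int d..} T)"
begin

interpretation \<mu>: prob_space \<mu> by (rule prob_\<mu>)

interpretation marginals:
  projective_family UNIV "\<lambda>J. distr \<mu> (PiM J (\<lambda>_. borel)) (\<lambda>x. restrict x J)" "\<lambda>_. borel"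
  by (rule projective_family_marginals[OF prob_\<mu> sets_\<mu>])

lemma measure_shift_by_vimage:
  "E \<in> sets path_space \<Longrightarrow> measure \<mu> (shift_by h -` E) = measure \<mu> E"
  using measure_distr[of "shift_by h" \<mu> path_space E] stationary[of h]
  by (simp add: measurable_cong_sets[OF sets_\<mu> refl] sets_eq_imp_space_eq[OF sets_\<mu>] space_PiM)

lemma cylinder_mixing:
  assumes "C \<in> marginals.generator"
  shows "\<exists>h\<ge>0. measure \<mu> (C \<inter> shift_by h -` C) = (measure \<mu> C)\<^sup>2"
proof -
  from assms obtain J S where C: "C = prod_emb UNIV (\<lambda>_. borel) J S"
    and J: "finite J" and S: "S \<in> sets (PiM J (\<lambda>_. borel))"
    by (auto elim: marginals.generator.cases)
  define N where "N = (\<Sum>j\<in>J. \<bar>j\<bar>)"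
  have N: "\<bar>j\<bar> \<le> N" if "j \<in> J" for j
    unfolding N_def using J that by (intro member_le_sum) auto
  \<comment> \<open>The shift by h moves the coordinates of C from \<open>[-N, N]\<close> into \<open>[N + d, \<infinity>)\<close>.\<close>
  define h where "h = 2 * N + int d"
  have "N \<ge> 0" by (simp add: N_def sum_nonneg)
  then have "h \<ge> 0" by (simp add: h_def)
  have "J \<subseteq> {..N}"
    using N by (force simp: abs_le_iff)
  then have past: "C = prod_emb UNIV (\<lambda>_. borel) {..N} (prod_emb {..N} (\<lambda>_. borel) J S)"
    by (simp add: C)
  have shifted: "N + int d \<le> j + h" if "j \<in> J" for j
    using N[OF that] by (simp add: h_def)
  define T where
    "T = (\<lambda>x. \<lambda>j\<in>J. x (j + h)) -` S \<inter> space (PiM {N + int d..} (\<lambda>_. borel :: real measure))"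
  have T: "T \<in> sets (PiM {N + int d..} (\<lambda>_. borel))"
    unfolding T_def using S shifted
    by (intro measurable_sets[OF _ S] measurable_restrict measurable_component_singleton) auto
  have future: "shift_by h -` C = prod_emb UNIV (\<lambda>_. borel) {N + int d..} T"
    by (auto simp: C T_def prod_emb_def shift_by_def space_PiM shifted cong: restrict_cong)
  have "prod_emb {..N} (\<lambda>_. borel) J S \<in> sets (PiM {..N} (\<lambda>_. borel))"
    using \<open>J \<subseteq> {..N}\<close> S by (rule measurable_prod_emb)
  from dependent[OF this T]
  have "measure \<mu> (C \<inter> shift_by h -` C) = measure \<mu> C * measure \<mu> (shift_by h -` C)"
    by (simp only: past[symmetric] future[symmetric])
  moreover have "C \<in> sets path_space"
    using C J S by auto
  ultimately show ?thesis
    using \<open>h \<ge> 0\<close> by (auto simp: measure_shift_by_vimage power2_eq_square)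
qed

lemma measure_shift_invariant_near_square:
  assumes A: "A \<in> sets path_space" "shift -` A \<inter> space path_space = A" and "e > 0"
  shows "\<bar>measure \<mu> A - (measure \<mu> A)\<^sup>2\<bar> < 4 * e"
proof -
  let ?p = "measure \<mu> A"
  have A_\<mu>: "A \<in> sets \<mu>"
    using A sets_\<mu> by simp
  have "approximable \<mu> marginals.generator A"
    using marginals.algebra_generator marginals.sets_PiM_generator sets_\<mu> A_\<mu>
          sets_eq_imp_space_eq[OF sets_\<mu>]
    by (intro \<mu>.approximable_generating_algebra) simp_all
  then obtain C where C: "C \<in> marginals.generator" and AC: "measure \<mu> (sym_diff A C) < e"
    using \<open>e > 0\<close> unfolding approximable_def by blast
  let ?q = "measure \<mu> C"
  obtain h where "h \<ge> 0" and mixing: "measure \<mu> (C \<inter> shift_by h -` C) = ?q\<^sup>2"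
    using cylinder_mixing[OF C] by blast
  have "C \<in> sets path_space"
    using C by (auto elim: marginals.generator.cases)
  then have C_sets: "C \<in> sets \<mu>" "shift_by h -` C \<in> sets \<mu>"
    using measurable_sets[OF measurable_shift_by, of C h] sets_\<mu> by (simp_all add: space_PiM)
  have "sym_diff A (shift_by h -` C) = shift_by h -` sym_diff A C"
    using shift_by_vimage_eq_if_invariant[OF A(2) \<open>h \<ge> 0\<close>] by auto
  moreover have "measure \<mu> (shift_by h -` sym_diff A C) = measure \<mu> (sym_diff A C)"
    using A_\<mu> C_sets sets_\<mu> by (intro measure_shift_by_vimage) auto
  ultimately have "measure \<mu> (sym_diff A (C \<inter> shift_by h -` C)) < 2 * e"
    using \<mu>.measure_sym_diff_Int_le[of A C "shift_by h -` C"] A_\<mu> C_sets AC by simp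
  then have "\<bar>?p - ?q\<^sup>2\<bar> < 2 * e"
    using \<mu>.abs_measure_diff_le_measure_sym_diff[of A "C \<inter> shift_by h -` C"] A_\<mu> C_sets mixing
    by auto
  moreover have "\<bar>?q\<^sup>2 - ?p\<^sup>2\<bar> < 2 * e"
    using abs_power2_diff_le[of ?p ?q] \<mu>.abs_measure_diff_le_measure_sym_diff[of A C] A_\<mu> C_sets AC
    by (simp add: abs_minus_commute)
  ultimately show ?thesis
    by simp
qed

lemma measure_shift_invariant_eq_0_or_1:
  assumes "A \<in> sets path_space" "shift -` A \<inter> space path_space = A"
  shows "measure \<mu> A \<in> {0, 1}"
proof -
  let ?p = "measure \<mu> A"
  have "?p - ?p\<^sup>2 = 0"
  proof (rule ccontr)
    assume "?p - ?p\<^sup>2 \<noteq> 0"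
    then show False
      using measure_shift_invariant_near_square[OF assms, of "\<bar>?p - ?p\<^sup>2\<bar> / 4"] by simp
  qed
  then have "?p * (1 - ?p) = 0"
    by (simp add: power2_eq_square algebra_simps)
  then show ?thesis
    by auto
qed

end

definition antidiagonal_sum :: "nat \<Rightarrow> (int \<Rightarrow> nat \<Rightarrow> real) \<Rightarrow> int \<Rightarrow> real" where
  "antidiagonal_sum k x n = (\<Sum>j<k. x (n + int j) (k - j))"

lemma measurable_antidiagonal_sums:
  assumes "\<And>n j. n \<in> N \<Longrightarrow> j < k \<Longrightarrow> n + int j \<in> A"
  shows "(\<lambda>x. \<lambda>n\<in>N. antidiagonal_sum k x n)
           \<in> measurable (PiM A (\<lambda>_. PiM {1..k} (\<lambda>_. borel))) (PiM N (\<lambda>_. borel))"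
  unfolding antidiagonal_sum_def
proof (intro measurable_restrict borel_measurable_sum)
  fix n j assume "n \<in> N" "j \<in> {..<k}"
  with assms have "n + int j \<in> A" "k - j \<in> {1..k}" by auto
  then show "(\<lambda>x. x (n + int j) (k - j)) \<in> borel_measurable (PiM A (\<lambda>_. PiM {1..k} (\<lambda>_. borel)))"
    by (intro measurable_compose[OF measurable_component_singleton[of "n + int j"]
                                     measurable_component_singleton[of "k - j"]])
qed

lemma restrict_antidiagonal_sum_restrict:
  assumes "\<And>n j. n \<in> N \<Longrightarrow> j < k \<Longrightarrow> n + int j \<in> A"
  shows "restrict (antidiagonal_sum k (restrict x A)) N = restrict (antidiagonal_sum k x) N"
  using assms by (auto simp: antidiagonal_sum_def)

lemma sum_windows_regroup:
  fixes n :: "'i \<Rightarrow> int"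
  assumes "finite K"
  shows "(\<Sum>i\<in>K. \<Sum>j<k. f i (n i + int j))
       = (\<Sum>r\<in>(\<Union>i\<in>K. {n i..<n i + int k}). \<Sum>i\<in>{i\<in>K. r \<in> {n i..<n i + int k}}. f i r)"
proof -
  have window: "(\<Sum>j<k. g (m + int j)) = (\<Sum>r\<in>{m..<m + int k}. g r)" for g and m :: int
  proof (rule sum.reindex_bij_witness[where i = "\<lambda>r. nat (r - m)" and j = "\<lambda>j. m + int j"])
  qed auto
  let ?R = "\<Union>i\<in>K. {n i..<n i + int k}"
  have "(\<Sum>i\<in>K. \<Sum>j<k. f i (n i + int j)) = (\<Sum>i\<in>K. \<Sum>r\<in>{r\<in>?R. r \<in> {n i..<n i + int k}}. f i r)"
    by (simp add: window) (intro sum.cong refl arg_cong2[where f = sum]; auto)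
  also have "\<dots> = (\<Sum>r\<in>?R. \<Sum>i\<in>{i\<in>K. r \<in> {n i..<n i + int k}}. f i r)"
    using assms by (intro sum.swap_restrict) auto
  finally show ?thesis .
qed

locale antidiagonal_process =
  fixes k :: nat
    and \<nu> :: "(nat \<Rightarrow> real) measure"
    and M :: "'a measure"
    and X :: "int \<Rightarrow> 'a \<Rightarrow> (nat \<Rightarrow> real)"
    and Y :: "int \<Rightarrow> 'a \<Rightarrow> real"
  assumes k: "k > 1"
    and nu_prob: "prob_space \<nu>"
    and nu_sets: "sets \<nu> = sets (PiM {1..k} (\<lambda>_. borel))"
    and nu_marg: "\<And>i. i \<in> {1..k} \<Longrightarrow>
        distr \<nu> (PiM ({1..k} - {i}) (\<lambda>_. borel)) (\<lambda>x. restrict x ({1..k} - {i}))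
          = PiM ({1..k} - {i}) (\<lambda>_. std_normal)"
    and M: "prob_space M"
    and X_indep: "prob_space.indep_vars M (\<lambda>_. PiM {1..k} (\<lambda>_. borel)) X UNIV"
    and X_distr: "\<And>n. distr M (PiM {1..k} (\<lambda>_. borel)) (X n) = \<nu>"
    and Y_def: "\<And>n \<omega>. Y n \<omega> = (\<Sum>j<k. X (n + int j) \<omega> (k - j))"

sublocale antidiagonal_process \<subseteq> prob_space M by (rule M)

context antidiagonal_process
begin

abbreviation row_space :: "(nat \<Rightarrow> real) measure" where
  "row_space \<equiv> PiM {1..k} (\<lambda>_. borel)"

abbreviation array_space :: "(int \<Rightarrow> nat \<Rightarrow> real) measure" where
  "array_space \<equiv> PiM UNIV (\<lambda>_. row_space)"

lemma X_measurable [measurable]: "X n \<in> measurable M row_space"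
  using X_indep by (auto simp: indep_vars_def)

lemma Y_eq_antidiagonal_sum: "Y n \<omega> = antidiagonal_sum k (\<lambda>r. X r \<omega>) n"
  by (simp add: Y_def antidiagonal_sum_def)

lemma X_array_measurable: "(\<lambda>\<omega> r. X r \<omega>) \<in> measurable M array_space"
  by (rule measurable_PiM_single') (use X_measurable measurable_space[OF X_measurable] in auto)

lemma Y_path_eq:
  "(\<lambda>\<omega> n. Y n \<omega>) = (\<lambda>x. \<lambda>n\<in>UNIV. antidiagonal_sum k x n) \<circ> (\<lambda>\<omega> r. X r \<omega>)"
  by (simp add: fun_eq_iff Y_eq_antidiagonal_sum)

lemma Y_path_measurable: "(\<lambda>\<omega> n. Y n \<omega>) \<in> measurable M path_space"
  unfolding Y_path_eq
  by (rule measurable_comp[OF X_array_measurable measurable_antidiagonal_sums]) simp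

lemma Y_measurable: "Y n \<in> borel_measurable M"
  using measurable_compose[OF Y_path_measurable measurable_component_singleton[of n UNIV]] by simp

lemma distr_X_array: "distr M array_space (\<lambda>\<omega> r. X r \<omega>) = PiM UNIV (\<lambda>_. \<nu>)"
  using distr_indep_vars_eq_PiM[OF X_indep] by (simp only: X_distr restrict_UNIV)

lemma stationary:
  "distr M path_space (\<lambda>\<omega> n. Y (n + h) \<omega>) = distr M path_space (\<lambda>\<omega> n. Y n \<omega>)"
proof -
  let ?sum = "\<lambda>x. \<lambda>n\<in>UNIV. antidiagonal_sum k x n"
  let ?shift = "\<lambda>x. \<lambda>r\<in>UNIV. x (r + h)"
  have sets_array: "sets (PiM UNIV (\<lambda>_. \<nu>)) = sets array_space"
    by (intro sets_PiM_cong) (simp_all add: nu_sets)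
  note array_cong = measurable_cong_sets[OF sets_array refl]
  have sum_meas: "?sum \<in> measurable (PiM UNIV (\<lambda>_. \<nu>)) path_space"
    unfolding array_cong by (rule measurable_antidiagonal_sums) simp
  have shift_meas: "?shift \<in> measurable (PiM UNIV (\<lambda>_. \<nu>)) (PiM UNIV (\<lambda>_. \<nu>))"
    by (intro measurable_restrict measurable_component_singleton) simp
  have X_meas: "(\<lambda>\<omega> r. X r \<omega>) \<in> measurable M (PiM UNIV (\<lambda>_. \<nu>))"
    using X_array_measurable by (simp only: measurable_cong_sets[OF refl sets_array])
  have law: "distr M (PiM UNIV (\<lambda>_. \<nu>)) (\<lambda>\<omega> r. X r \<omega>) = PiM UNIV (\<lambda>_. \<nu>)"
    using distr_X_array by (simp only: distr_cong[OF refl sets_array refl])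
  have shift_invariant: "distr (PiM UNIV (\<lambda>_. \<nu>)) (PiM UNIV (\<lambda>_. \<nu>)) ?shift = PiM UNIV (\<lambda>_. \<nu>)"
    using distr_PiM_reindex[of UNIV "\<lambda>_. \<nu>" "\<lambda>r. r + h" UNIV] nu_prob by (simp add: inj_on_def)
  have "(\<lambda>\<omega> n. Y (n + h) \<omega>) = (?sum \<circ> ?shift) \<circ> (\<lambda>\<omega> r. X r \<omega>)"
    by (simp add: fun_eq_iff Y_eq_antidiagonal_sum antidiagonal_sum_def ac_simps)
  then have "distr M path_space (\<lambda>\<omega> n. Y (n + h) \<omega>)
      = distr (distr M (PiM UNIV (\<lambda>_. \<nu>)) (\<lambda>\<omega> r. X r \<omega>)) path_space (?sum \<circ> ?shift)"
    using distr_distr[OF measurable_comp[OF shift_meas sum_meas] X_meas] by simp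
  also have "\<dots> = distr (distr (PiM UNIV (\<lambda>_. \<nu>)) (PiM UNIV (\<lambda>_. \<nu>)) ?shift) path_space ?sum"
    unfolding law by (rule distr_distr[OF sum_meas shift_meas, symmetric])
  also have "\<dots> = distr (distr M (PiM UNIV (\<lambda>_. \<nu>)) (\<lambda>\<omega> r. X r \<omega>)) path_space ?sum"
    unfolding shift_invariant law ..
  also have "\<dots> = distr M path_space (\<lambda>\<omega> n. Y n \<omega>)"
    unfolding Y_path_eq by (rule distr_distr[OF sum_meas X_meas])
  finally show ?thesis .
qed

lemma finitely_dependent:
  "indep_var (PiM {..m} (\<lambda>_. borel)) (\<lambda>\<omega>. restrict (\<lambda>n. Y n \<omega>) {..m})
             (PiM {m + int k..} (\<lambda>_. borel)) (\<lambda>\<omega>. restrict (\<lambda>n. Y n \<omega>) {m + int k..})"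
proof -
  let ?past = "{..<m + int k}" and ?future = "{m + int k..}"
  have indep: "indep_var (PiM ?past (\<lambda>_. row_space)) (\<lambda>\<omega>. restrict (\<lambda>r. X r \<omega>) ?past)
                  (PiM ?future (\<lambda>_. row_space)) (\<lambda>\<omega>. restrict (\<lambda>r. X r \<omega>) ?future)"
    by (rule indep_var_restrict[OF X_indep]) (auto simp: disjoint_iff)
  have "restrict (antidiagonal_sum k (restrict x ?past)) {..m} = restrict (antidiagonal_sum k x) {..m}"
    and "restrict (antidiagonal_sum k (restrict x ?future)) ?future = restrict (antidiagonal_sum k x) ?future"
    for x
    by (rule restrict_antidiagonal_sum_restrict; simp)+
  then show ?thesis
    using indep_var_compose[OF indep measurable_antidiagonal_sums[of "{..m}" k ?past]
                                 measurable_antidiagonal_sums[of ?future k ?future]]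
    by (simp add: comp_def Y_eq_antidiagonal_sum)
qed

lemma char_row_linear_form:
  assumes "finite J" "inj_on g J" "g ` J \<subseteq> {1..k}" "card J < k"
  shows "char (distr \<nu> borel (\<lambda>x. \<Sum>j\<in>J. b j * x (g j))) t
       = complex_of_real (exp (- (\<Sum>j\<in>J. (b j)\<^sup>2) * t\<^sup>2 / 2))"
proof -
  have "card (g ` J) < card {1..k}"
    using assms by (simp add: card_image)
  then obtain i where "i \<in> {1..k}" "i \<notin> g ` J"
    using assms(3) by (metis subsetI subset_antisym less_irrefl)
  then have "i \<in> {1..k}" "g ` J \<subseteq> {1..k} - {i}"
    using assms(3) by auto
  then show ?thesis
    using char_linear_form_omitting_coordinate[OF nu_sets nu_marg] assms(1,2) by blast
qed

lemma char_window_row: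
  fixes nn :: "'i \<Rightarrow> int" and r :: int
  assumes K: "finite K" "card K < k" "inj_on nn K"
  defines "I \<equiv> {i\<in>K. r \<in> {nn i..<nn i + int k}}"
  shows "char (distr M borel (\<lambda>\<omega>. \<Sum>i\<in>I. a i * X r \<omega> (k - nat (r - nn i)))) t
       = complex_of_real (exp (- (\<Sum>i\<in>I. (a i)\<^sup>2) * t\<^sup>2 / 2))"
proof -
  let ?g = "\<lambda>i. k - nat (r - nn i)" and ?form = "\<lambda>x. \<Sum>i\<in>I. a i * x (k - nat (r - nn i))"
  have "inj_on ?g I"
    using K(3) by (auto simp: I_def inj_on_def)
  moreover have "?g ` I \<subseteq> {1..k}" "card I < k"
    using K(1,2) card_mono[of K I] by (auto simp: I_def)
  moreover have "distr M borel (\<lambda>\<omega>. ?form (X r \<omega>)) = distr \<nu> borel ?form"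
  proof -
    have form_meas: "?form \<in> borel_measurable row_space"
      by (auto simp: I_def intro!: borel_measurable_sum borel_measurable_times measurable_component_singleton)
    then show ?thesis
      using distr_distr[OF form_meas X_measurable[of r]] unfolding X_distr comp_def by simp
  qed
  ultimately show ?thesis
    using char_row_linear_form[of I ?g] K(1) by (simp add: I_def)
qed

lemma distr_linear_combination_Y:
  fixes nn :: "'i \<Rightarrow> int"
  assumes K: "finite K" "card K < k" "inj_on nn K"
  shows "distr M borel (\<lambda>\<omega>. \<Sum>i\<in>K. a i * Y (nn i) \<omega>)
       = normal_measure 0 (real k * (\<Sum>i\<in>K. (a i)\<^sup>2))"
proof -
  \<comment> \<open>Row r enters \<open>Y (nn i)\<close> for \<open>i \<in> I r\<close>, through its coordinate \<open>k - (r - nn i)\<close>.\<close>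
  define R where "R = (\<Union>i\<in>K. {nn i..<nn i + int k})"
  define I where "I r = {i\<in>K. r \<in> {nn i..<nn i + int k}}" for r
  define F where "F r = (\<lambda>\<omega>. \<Sum>i\<in>I r. a i * X r \<omega> (k - nat (r - nn i)))" for r
  define v where "v = real k * (\<Sum>i\<in>K. (a i)\<^sup>2)"
  have "v \<ge> 0"
    by (simp add: v_def sum_nonneg)
  have regroup: "(\<Sum>i\<in>K. a i * Y (nn i) \<omega>) = (\<Sum>r\<in>R. F r \<omega>)" for \<omega>
    using sum_windows_regroup[OF K(1), where f = "\<lambda>i r. a i * X r \<omega> (k - nat (r - nn i))"
                                         and n = nn and k = k]
    by (simp add: Y_def sum_distrib_left R_def I_def F_def)
  have variance: "v = (\<Sum>r\<in>R. \<Sum>i\<in>I r. (a i)\<^sup>2)"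
    using sum_windows_regroup[OF K(1), where f = "\<lambda>i r. (a i)\<^sup>2" and n = nn and k = k]
    by (simp add: v_def sum_distrib_left R_def I_def)
  have F_meas: "F r \<in> borel_measurable M" for r
    unfolding F_def I_def
    by (intro borel_measurable_sum borel_measurable_times measurable_compose[OF X_measurable]) auto
  have indep: "indep_vars (\<lambda>_. borel) F R"
  proof -
    let ?row_form = "\<lambda>r x. \<Sum>i\<in>I r. a i * x (k - nat (r - nn i))"
    have "indep_vars (\<lambda>_. borel) (\<lambda>r \<omega>. ?row_form r (X r \<omega>)) UNIV"
      by (rule indep_vars_compose2[OF X_indep])
         (auto simp: I_def intro!: borel_measurable_sum borel_measurable_times measurable_component_singleton)
    moreover have "F = (\<lambda>r \<omega>. ?row_form r (X r \<omega>))"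
      by (simp add: fun_eq_iff F_def)
    ultimately show ?thesis
      using indep_vars_subset by blast
  qed
  have "char (distr M borel (\<lambda>\<omega>. \<Sum>r\<in>R. F r \<omega>)) t = char (normal_measure 0 v) t" for t
  proof -
    have "char (distr M borel (\<lambda>\<omega>. \<Sum>r\<in>R. F r \<omega>)) t = (\<Prod>r\<in>R. char (distr M borel (F r)) t)"
      by (rule char_distr_sum[OF indep])
    also have "\<dots> = (\<Prod>r\<in>R. complex_of_real (exp (- (\<Sum>i\<in>I r. (a i)\<^sup>2) * t\<^sup>2 / 2)))"
      unfolding F_def I_def by (intro prod.cong refl char_window_row[OF K])
    also have "\<dots> = complex_of_real (exp (\<Sum>r\<in>R. - (\<Sum>i\<in>I r. (a i)\<^sup>2) * t\<^sup>2 / 2))"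
      using K(1) by (simp add: R_def exp_sum of_real_prod[symmetric] del: of_real_prod)
    also have "(\<Sum>r\<in>R. - (\<Sum>i\<in>I r. (a i)\<^sup>2) * t\<^sup>2 / 2) = - v * t\<^sup>2 / 2"
      by (simp add: variance sum_divide_distrib[symmetric] sum_distrib_right[symmetric] sum_negf)
    finally show ?thesis
      using char_normal_measure_0[OF \<open>v \<ge> 0\<close>] by simp
  qed
  then have "distr M borel (\<lambda>\<omega>. \<Sum>r\<in>R. F r \<omega>) = normal_measure 0 v"
    using F_meas \<open>v \<ge> 0\<close>
    by (intro Levy_uniqueness real_distribution_distr real_distribution_normal_measure_0) auto
  then show ?thesis
    by (simp add: regroup v_def)
qed

lemma gaussian_law_with_Y:
  fixes nn :: "'i \<Rightarrow> int"
  assumes K: "finite K" "card K < k" "inj_on nn K"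
  shows "gaussian_law_with K (distr M (PiM K (\<lambda>_. borel)) (\<lambda>\<omega>. \<lambda>i\<in>K. Y (nn i) \<omega>))
           (\<lambda>_. 0) (\<lambda>i j. if i = j then real k else 0)"
  unfolding gaussian_law_with_def
proof
  fix a :: "'i \<Rightarrow> real"
  have "(\<lambda>\<omega>. \<lambda>i\<in>K. Y (nn i) \<omega>) \<in> measurable M (PiM K (\<lambda>_. borel))"
    by (intro measurable_restrict Y_measurable)
  then have "distr (distr M (PiM K (\<lambda>_. borel)) (\<lambda>\<omega>. \<lambda>i\<in>K. Y (nn i) \<omega>)) borel (\<lambda>x. \<Sum>i\<in>K. a i * x i)
      = distr M borel (\<lambda>\<omega>. \<Sum>i\<in>K. a i * Y (nn i) \<omega>)"
    by (subst distr_distr) (auto simp: comp_def intro!: distr_cong sum.cong)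
  moreover have "(\<Sum>i\<in>K. \<Sum>j\<in>K. a i * a j * (if i = j then real k else 0))
      = real k * (\<Sum>i\<in>K. (a i)\<^sup>2)"
    using K(1) by (simp add: sum_distrib_left power2_eq_square mult_ac if_distrib cong: if_cong)
  ultimately show
    "distr (distr M (PiM K (\<lambda>_. borel)) (\<lambda>\<omega>. \<lambda>i\<in>K. Y (nn i) \<omega>)) borel (\<lambda>x. \<Sum>i\<in>K. a i * x i)
      = normal_measure (\<Sum>i\<in>K. a i * 0) (\<Sum>i\<in>K. \<Sum>j\<in>K. a i * a j * (if i = j then real k else 0))"
    using distr_linear_combination_Y[OF K] by simp
qed

lemma ergodic:
  assumes "A \<in> sets path_space" "shift -` A \<inter> space path_space = A"
  shows "measure (distr M path_space (\<lambda>\<omega> n. Y n \<omega>)) A \<in> {0, 1}"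
proof (rule measure_shift_invariant_eq_0_or_1[where d = k, OF _ _ _ _ assms])
  let ?Ypath = "\<lambda>\<omega> n. Y n \<omega>"
  show "prob_space (distr M path_space ?Ypath)"
    by (rule prob_space_distr[OF Y_path_measurable])
  show "distr (distr M path_space ?Ypath) path_space (shift_by h) = distr M path_space ?Ypath" for h
    using distr_distr[OF measurable_shift_by Y_path_measurable, of h] stationary[of h]
    by (simp add: comp_def shift_by_def)
  fix m :: int and S T :: "(int \<Rightarrow> real) set"
  assume S: "S \<in> sets (PiM {..m} (\<lambda>_. borel))" and T: "T \<in> sets (PiM {m + int k..} (\<lambda>_. borel))"
  let ?past = "prod_emb UNIV (\<lambda>_. borel :: real measure) {..m} S"
    and ?future = "prod_emb UNIV (\<lambda>_. borel :: real measure) {m + int k..} T"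
  have law: "measure (distr M path_space ?Ypath) E = prob (?Ypath -` E \<inter> space M)"
    if "E \<in> sets path_space" for E
    by (rule measure_distr[OF Y_path_measurable that])
  have "?Ypath -` (?past \<inter> ?future) \<inter> space M
      = (\<lambda>\<omega>. (restrict (\<lambda>n. Y n \<omega>) {..m}, restrict (\<lambda>n. Y n \<omega>) {m + int k..})) -` (S \<times> T) \<inter> space M"
    "?Ypath -` ?past \<inter> space M = (\<lambda>\<omega>. restrict (\<lambda>n. Y n \<omega>) {..m}) -` S \<inter> space M"
    "?Ypath -` ?future \<inter> space M = (\<lambda>\<omega>. restrict (\<lambda>n. Y n \<omega>) {m + int k..}) -` T \<inter> space M"
    by (auto simp: prod_emb_def)
  then show "measure (distr M path_space ?Ypath) (?past \<inter> ?future)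
      = measure (distr M path_space ?Ypath) ?past * measure (distr M path_space ?Ypath) ?future"
    using indep_varD[OF finitely_dependent S T] S T by (simp add: law sets.Int)
qed (simp_all)

end

theorem theorem2p1:
  fixes k :: nat
    and \<nu> :: "(nat \<Rightarrow> real) measure"
    and M :: "'a measure"
    and X :: "int \<Rightarrow> 'a \<Rightarrow> (nat \<Rightarrow> real)"
    and Y :: "int \<Rightarrow> 'a \<Rightarrow> real"
  assumes k: "k > 1"
    and nu_prob: "prob_space \<nu>"
    and nu_sets: "sets \<nu> = sets (PiM {1..k} (\<lambda>_. borel))"
    and nu_not_gauss: "\<not> gaussian_law {1..k} \<nu>"
    and nu_marg: "\<And>i. i \<in> {1..k} \<Longrightarrow>
        distr \<nu> (PiM ({1..k} - {i}) (\<lambda>_. borel)) (\<lambda>x. restrict x ({1..k} - {i}))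
          = PiM ({1..k} - {i}) (\<lambda>_. std_normal)"
    and M: "prob_space M"
    and X_indep: "prob_space.indep_vars M (\<lambda>_. PiM {1..k} (\<lambda>_. borel)) X UNIV"
    and X_distr: "\<And>n. distr M (PiM {1..k} (\<lambda>_. borel)) (X n) = \<nu>"
    and Y_def: "\<And>n \<omega>. Y n \<omega> = (\<Sum>j<k. X (n + int j) \<omega> (k - j))"
  shows
    "(\<forall>h::int. distr M path_space (\<lambda>\<omega> n. Y (n + h) \<omega>) = distr M path_space (\<lambda>\<omega> n. Y n \<omega>))
     \<and> (\<forall>m::int. prob_space.indep_var M
           (PiM {..m} (\<lambda>_. borel)) (\<lambda>\<omega>. restrict (\<lambda>n. Y n \<omega>) {..m})
           (PiM {m + int k..} (\<lambda>_. borel)) (\<lambda>\<omega>. restrict (\<lambda>n. Y n \<omega>) {m + int k..}))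
     \<and> (\<forall>nn :: nat \<Rightarrow> int. strict_mono_on {1..k-1} nn \<longrightarrow>
           gaussian_law_with {1..k-1}
             (distr M (PiM {1..k-1} (\<lambda>_. borel)) (\<lambda>\<omega>. \<lambda>i\<in>{1..k-1}. Y (nn i) \<omega>))
             (\<lambda>_. 0) (\<lambda>i j. if i = j then real k else 0))
     \<and> (\<forall>A \<in> sets path_space. shift -` A \<inter> space path_space = A \<longrightarrow>
           measure (distr M path_space (\<lambda>\<omega> n. Y n \<omega>)) A \<in> {0, 1})"
proof -
  interpret antidiagonal_process k \<nu> M X Y
    by (rule antidiagonal_process.intro[OF k nu_prob nu_sets nu_marg M X_indep X_distr Y_def])
  have "gaussian_law_with {1..k-1}
          (distr M (PiM {1..k-1} (\<lambda>_. borel)) (\<lambda>\<omega>. \<lambda>i\<in>{1..k-1}. Y (nn i) \<omega>))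
          (\<lambda>_. 0) (\<lambda>i j. if i = j then real k else 0)"
    if "strict_mono_on {1..k-1} nn" for nn :: "nat \<Rightarrow> int"
    using k strict_mono_on_imp_inj_on[OF that] by (intro gaussian_law_with_Y) auto
  then show ?thesis
    using stationary finitely_dependent ergodic by blast
qed

end
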